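(* Let $\lambda\in\mathbb{C}\setminus(\mathbb{R}\cup S^1)$, $\mu\in\mathbb{C}\setminus\{0,1\}$, and $a,b\in\mathbb{C}^n$ with $a\neq b$. Let $G$ be the group generated by $f=(a,\lambda)$ and $g=(b,\mu)$, and let $L=\mathbb{C}(b-a)+a=\{a+t(b-a):t\in\mathbb{C}\}$. Then $\overline{G_1(z)}=L$ for every $z\in L$; in particular $\overline{G(z)}=L$ for every $z\in L$.
   Context: $S^1=\{z\in\mathbb{C}:|z|=1\}$. For $c\in\mathbb{C}^n$ and $\nu\in\mathbb{C}\setminus\{0,1\}$, $(c,\nu)$ denotes the map $z\mapsto\nu(z-c)+c$ of $\mathbb{C}^n$. $G_1$ is the set of translations $z\mapsto z+v$ belonging to $G$, and $G_1(z)=\{T(z):T\in G_1\}$; $G(z)=\{h(z):h\in G\}$. *)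

theory Defs
  imports "HOL-Analysis.Analysis"
begin

definition homothety :: "complex^'n \<Rightarrow> complex \<Rightarrow> complex^'n \<Rightarrow> complex^'n" where
  "homothety c nu = (\<lambda>z. nu *s (z - c) + c)"

inductive_set gen_group :: "('a \<Rightarrow> 'a) set \<Rightarrow> ('a \<Rightarrow> 'a) set" for S where
  gen_id: "id \<in> gen_group S"
| gen_gen: "s \<in> S \<Longrightarrow> h \<in> gen_group S \<Longrightarrow> s \<circ> h \<in> gen_group S"
| gen_inv: "s \<in> S \<Longrightarrow> h \<in> gen_group S \<Longrightarrow> inv s \<circ> h \<in> gen_group S"

text \<open>G_1: the translations belonging to G.\<close>
definition translations_in :: "(('a::ab_group_add) \<Rightarrow> 'a) set \<Rightarrow> ('a \<Rightarrow> 'a) set" where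
  "translations_in G = {T \<in> G. \<exists>v. T = (\<lambda>z. z + v)}"

definition orbit :: "('a \<Rightarrow> 'a) set \<Rightarrow> 'a \<Rightarrow> 'a set" where
  "orbit G z = {h z | h. h \<in> G}"

end

theory Submission
  imports Defs
begin

(* Idea of the proof: the commutator f g f^-1 g^-1 is the translation by kappa (b - a) with
   kappa = (mu - 1)(1 - lam) non-zero.  Conjugating a translation by v with a homothety (a,rho)
   gives the translation by rho v, so with rho in {lam, 1/lam} chosen non-real of modulus < 1,
   the translation subgroup G_1 contains all translations by kappa rho^m (p + q rho) (b - a)
   (m natural, p, q integers).  These coefficients form ever finer copies of the lattice
   Z + Z rho and are dense in C, so G_1(z) is dense in L for z on L.  Conversely both
   generators fix L setwise and L is closed, so the closure of G(z) lies in L. *)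

lemma gen_group_gen: "s \<in> S \<Longrightarrow> s \<in> gen_group S"
  using gen_gen[OF _ gen_id] by simp

lemma gen_group_inv_gen: "s \<in> S \<Longrightarrow> inv s \<in> gen_group S"
  using gen_inv[OF _ gen_id] by simp

lemma gen_group_comp: "h \<in> gen_group S \<Longrightarrow> k \<in> gen_group S \<Longrightarrow> h \<circ> k \<in> gen_group S"
  by (induction rule: gen_group.induct) (auto simp: comp_assoc intro: gen_group.intros)

lemma gen_group_inv:
  assumes bij: "\<And>s. s \<in> S \<Longrightarrow> bij s" and "h \<in> gen_group S"
  shows "bij h \<and> inv h \<in> gen_group S"
  using assms(2)
proof (induction rule: gen_group.induct)
  case gen_id
  show ?case using gen_group.gen_id bij_id inv_id by metis
next
  case (gen_gen s h)
  have "bij s" using bij gen_gen(1) by blast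
  have "inv (s \<circ> h) = inv h \<circ> inv s"
    using o_inv_distrib[OF \<open>bij s\<close>] gen_gen.IH by blast
  moreover have "bij (s \<circ> h)" using bij_comp[OF _ \<open>bij s\<close>] gen_gen.IH by blast
  moreover have "inv h \<circ> inv s \<in> gen_group S"
    using gen_group_comp gen_gen.IH gen_group_inv_gen[OF gen_gen(1)] by blast
  ultimately show ?case by metis
next
  case (gen_inv s h)
  have "bij s" using bij gen_inv(1) by blast
  then have "bij (inv s)" by (rule bij_imp_bij_inv)
  have "inv (inv s \<circ> h) = inv h \<circ> inv (inv s)"
    using o_inv_distrib[OF \<open>bij (inv s)\<close>] gen_inv.IH by blast
  also have "\<dots> = inv h \<circ> s" by (simp add: inv_inv_eq[OF \<open>bij s\<close>])
  finally have "inv (inv s \<circ> h) = inv h \<circ> s" .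
  moreover have "bij (inv s \<circ> h)" using bij_comp[OF _ \<open>bij (inv s)\<close>] gen_inv.IH by blast
  moreover have "inv h \<circ> s \<in> gen_group S"
    using gen_group_comp gen_inv.IH gen_group_gen[OF gen_inv(1)] by blast
  ultimately show ?case by metis
qed

lemma gen_group_preserves:
  assumes "\<And>s x. s \<in> S \<Longrightarrow> x \<in> A \<Longrightarrow> s x \<in> A" and "\<And>s x. s \<in> S \<Longrightarrow> x \<in> A \<Longrightarrow> inv s x \<in> A"
    and "h \<in> gen_group S" and "x \<in> A"
  shows "h x \<in> A"
  using assms(3,4) by (induction arbitrary: x rule: gen_group.induct) (auto simp: assms(1,2))

definition translation_vectors :: "('a::ab_group_add \<Rightarrow> 'a) set \<Rightarrow> 'a set" where
  "translation_vectors G = {v. (\<lambda>z. z + v) \<in> G}"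

lemma orbit_translations_in: "orbit (translations_in G) z = (\<lambda>v. z + v) ` translation_vectors G"
  unfolding orbit_def translations_in_def translation_vectors_def by auto

lemma translation_vectors_zero: "0 \<in> translation_vectors (gen_group S)"
  using gen_group.gen_id by (simp add: translation_vectors_def id_def)

lemma translation_vectors_add:
  assumes "v \<in> translation_vectors (gen_group S)" and "w \<in> translation_vectors (gen_group S)"
  shows "v + w \<in> translation_vectors (gen_group S)"
proof -
  have "(\<lambda>z. z + (v + w)) = (\<lambda>z. z + v) \<circ> (\<lambda>z. z + w)"
    by (simp add: fun_eq_iff algebra_simps)
  also have "\<dots> \<in> gen_group S"
    using assms unfolding translation_vectors_def by (intro gen_group_comp) simp_all
  finally show ?thesis unfolding translation_vectors_def by simp
qed

lemma translation_vectors_uminus: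
  assumes "\<And>s. s \<in> S \<Longrightarrow> bij s" and "v \<in> translation_vectors (gen_group S)"
  shows "- v \<in> translation_vectors (gen_group S)"
proof -
  have "(\<lambda>z. z + - v) = inv (\<lambda>z. z + v)"
    by (rule inv_unique_comp[symmetric]) (simp_all add: fun_eq_iff)
  also have "\<dots> \<in> gen_group S"
    using gen_group_inv[OF assms(1)] assms(2) unfolding translation_vectors_def by blast
  finally show ?thesis unfolding translation_vectors_def by simp
qed

lemma translation_vectors_of_int:
  fixes v :: "complex^'n"
  assumes "\<And>s. s \<in> S \<Longrightarrow> bij s" and v: "v \<in> translation_vectors (gen_group S)"
  shows "of_int k *s v \<in> translation_vectors (gen_group S)"
proof (induction k rule: int_induct[where k = 0])
  case base
  then show ?case using translation_vectors_zero by simp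
next
  case (step1 i)
  have eq: "of_int (i + 1) *s v = of_int i *s v + v" by (simp add: vec_eq_iff algebra_simps)
  show ?case unfolding eq by (rule translation_vectors_add[OF step1(2) v])
next
  case (step2 i)
  have eq: "of_int (i - 1) *s v = of_int i *s v + - v" by (simp add: vec_eq_iff algebra_simps)
  show ?case unfolding eq by (rule translation_vectors_add[OF step2(2) translation_vectors_uminus[OF assms]])
qed

lemma homothety_comp_same: "homothety c nu \<circ> homothety c nu' = homothety c (nu * nu')"
  by (auto simp: fun_eq_iff homothety_def vec_eq_iff algebra_simps)

lemma homothety_one: "homothety c 1 = id"
  by (auto simp: fun_eq_iff homothety_def)

lemma inv_homothety: "nu \<noteq> 0 \<Longrightarrow> inv (homothety c nu) = homothety c (inverse nu)"
  by (rule inv_unique_comp) (simp_all add: homothety_comp_same homothety_one)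

lemma bij_homothety: "nu \<noteq> 0 \<Longrightarrow> bij (homothety c nu)"
  by (rule o_bij[of "homothety c (inverse nu)"]) (simp_all add: homothety_comp_same homothety_one)

lemma homothety_conj_translation:
  "nu \<noteq> 0 \<Longrightarrow> homothety c nu \<circ> (\<lambda>z. z + v) \<circ> homothety c (inverse nu) = (\<lambda>z. z + nu *s v)"
  by (auto simp: fun_eq_iff homothety_def vec_eq_iff field_simps)

lemma homothety_commutator:
  "lam \<noteq> 0 \<Longrightarrow> mu \<noteq> 0 \<Longrightarrow>
   homothety a lam \<circ> homothety b mu \<circ> homothety a (inverse lam) \<circ> homothety b (inverse mu)
     = (\<lambda>z. z + ((mu - 1) * (1 - lam)) *s (b - a))"
  by (auto simp: fun_eq_iff homothety_def vec_eq_iff field_simps)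

lemma translation_vectors_homothety_scale:
  assumes bij: "\<And>s. s \<in> S \<Longrightarrow> bij s" and f: "homothety c nu \<in> gen_group S" and "nu \<noteq> 0"
    and v: "v \<in> translation_vectors (gen_group S)"
  shows "nu *s v \<in> translation_vectors (gen_group S)"
proof -
  have "homothety c (inverse nu) \<in> gen_group S"
    using gen_group_inv[OF bij f] \<open>nu \<noteq> 0\<close> by (simp add: inv_homothety)
  then have "homothety c nu \<circ> (\<lambda>z. z + v) \<circ> homothety c (inverse nu) \<in> gen_group S"
    using f v gen_group_comp unfolding translation_vectors_def by blast
  then show ?thesis
    unfolding translation_vectors_def homothety_conj_translation[OF \<open>nu \<noteq> 0\<close>] by simp
qed

lemma translation_vectors_scaled_lattice:
  assumes bij: "\<And>s. s \<in> S \<Longrightarrow> bij s" and f: "homothety c rho \<in> gen_group S" and "rho \<noteq> 0"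
    and v: "v \<in> translation_vectors (gen_group S)"
  shows "(rho ^ m * (of_int p + of_int q * rho)) *s v \<in> translation_vectors (gen_group S)"
proof -
  have pow: "(rho ^ k) *s v \<in> translation_vectors (gen_group S)" for k
  proof (induction k)
    case 0 then show ?case using v by simp
  next
    case (Suc k)
    have "rho *s (rho ^ k *s v) = rho ^ Suc k *s v" by (simp add: vector_smult_assoc)
    then show ?case
      using translation_vectors_homothety_scale[OF bij f \<open>rho \<noteq> 0\<close> Suc] by simp
  qed
  have eq: "(rho ^ m * (of_int p + of_int q * rho)) *s v
      = of_int p *s (rho ^ m *s v) + of_int q *s (rho ^ Suc m *s v)"
    by (simp add: vec_eq_iff algebra_simps)
  show ?thesis unfolding eq
    by (rule translation_vectors_add; rule translation_vectors_of_int[OF bij pow])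
qed

definition complex_line :: "complex^'n \<Rightarrow> complex^'n \<Rightarrow> (complex^'n) set" where
  "complex_line a d = {a + t *s d | t. True}"

lemma smult_vector_cancel: "t *s d = t' *s (d::complex^'n) \<Longrightarrow> d \<noteq> 0 \<Longrightarrow> t = t'"
  by (metis vec_eq_iff vector_smult_component zero_index mult_cancel_right)

(* A complex line is closed: it is a translate of the image of C under an
   injective real-linear map. *)
lemma closed_complex_line: "closed (complex_line a d)"
proof (cases "d = 0")
  case True
  then have "complex_line a d = {a}" by (auto simp: complex_line_def)
  then show ?thesis by simp
next
  case False
  have "linear (\<lambda>t::complex. t *s d)"
    by (rule linearI) (simp_all add: vec_eq_iff algebra_simps)
  moreover have "inj (\<lambda>t::complex. t *s d)"
    using False smult_vector_cancel by (auto simp: inj_def)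
  ultimately have "closed (range (\<lambda>t::complex. t *s d))"
    by (intro closed_injective_linear_image) simp_all
  moreover have "complex_line a d = (\<lambda>x. a + x) ` range (\<lambda>t. t *s d)"
    by (auto simp: complex_line_def)
  ultimately show ?thesis by (simp add: closed_translation)
qed

lemma homothety_complex_line:
  assumes "c \<in> complex_line a d" and "x \<in> complex_line a d"
  shows "homothety c nu x \<in> complex_line a d"
proof -
  obtain s t where "c = a + s *s d" and "x = a + t *s d"
    using assms by (auto simp: complex_line_def)
  then have "homothety c nu x = a + (nu * (t - s) + s) *s d"
    by (simp add: homothety_def vec_eq_iff algebra_simps)
  then show ?thesis unfolding complex_line_def by blast
qed

(* Every complex number lies within distance 1 of the lattice Z + Z rho, when rho
   is non-real of modulus less than 1 (round the imaginary part first, then the real part). *)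
lemma nearest_lattice_point:
  fixes rho :: complex
  assumes "Im rho \<noteq> 0" "cmod rho < 1"
  shows "\<exists>p q::int. cmod (y - (of_int p + of_int q * rho)) \<le> 1"
proof -
  define q where "q = round (Im y / Im rho)"
  define r where "r = y - of_int q * rho"
  define p where "p = round (Re r)"
  have "\<bar>of_int q - Im y / Im rho\<bar> \<le> 1/2" unfolding q_def by (rule of_int_round_abs_le)
  hence "\<bar>Im rho\<bar> * \<bar>of_int q - Im y / Im rho\<bar> \<le> \<bar>Im rho\<bar> * (1/2)"
    by (intro mult_left_mono) auto
  also have "\<bar>Im rho\<bar> * \<bar>of_int q - Im y / Im rho\<bar> = \<bar>Im r\<bar>"
    using assms(1) unfolding r_def by (simp add: abs_mult[symmetric] field_simps)
  finally have "\<bar>Im r\<bar> \<le> \<bar>Im rho\<bar> / 2" by simp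
  with abs_Im_le_cmod[of rho] assms(2) have im: "\<bar>Im r\<bar> \<le> 1/2" by linarith
  have re: "\<bar>of_int p - Re r\<bar> \<le> 1/2" unfolding p_def by (rule of_int_round_abs_le)
  have "cmod (r - of_int p) \<le> \<bar>Re (r - of_int p)\<bar> + \<bar>Im (r - of_int p)\<bar>" by (rule cmod_le)
  also have "\<dots> \<le> 1" using re im by (simp add: abs_minus_commute)
  finally have "cmod (y - (of_int p + of_int q * rho)) \<le> 1" unfolding r_def by (simp add: diff_diff_add add.commute)
  then show ?thesis by blast
qed

(* Rescaling that lattice by kappa rho^m, with m large, gives arbitrarily fine
   lattices; so these points approximate every complex number. *)
lemma scaled_lattice_dense:
  assumes "Im rho \<noteq> 0" "cmod rho < 1" "kappa \<noteq> 0" "e > 0"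
  shows "\<exists>m p q. cmod (w - kappa * (rho ^ m * (of_int p + of_int q * rho))) < e"
proof -
  obtain m where m: "cmod rho ^ m < e / cmod kappa"
    using real_arch_pow_inv[of "e / cmod kappa" "cmod rho"] assms by auto
  define u where "u = kappa * rho ^ m"
  have "u \<noteq> 0" using assms(1,3) by (auto simp: u_def)
  obtain p q :: int where pq: "cmod (w / u - (of_int p + of_int q * rho)) \<le> 1"
    using nearest_lattice_point[OF assms(1,2)] by blast
  have "w - u * (of_int p + of_int q * rho) = u * (w / u - (of_int p + of_int q * rho))"
    using \<open>u \<noteq> 0\<close> by (simp add: field_simps)
  then have "cmod (w - u * (of_int p + of_int q * rho)) = cmod u * cmod (w / u - (of_int p + of_int q * rho))"
    by (simp add: norm_mult)
  also have "\<dots> \<le> cmod u" using pq by (simp add: mult_left_le)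
  also have "cmod u < e"
    using m assms(3) by (simp add: u_def norm_mult norm_power pos_less_divide_eq mult.commute)
  finally show ?thesis unfolding u_def by (metis mult.assoc)
qed

lemma norm_vector_smult: "norm (c *s (x::complex^'n)) = cmod c * norm x"
proof -
  have "norm (c *s x) = L2_set (\<lambda>i. cmod c * norm (x$i)) UNIV"
    by (simp add: norm_vec_def norm_mult)
  also have "\<dots> = cmod c * L2_set (\<lambda>i. norm (x$i)) UNIV"
    by (simp add: L2_set_right_distrib)
  finally show ?thesis by (simp add: norm_vec_def)
qed

lemma complex_line_subset_closure_translates:
  fixes V :: "(complex^'n) set"
  assumes approx: "\<And>w e. e > 0 \<Longrightarrow> \<exists>c. c *s d \<in> V \<and> cmod (w - c) < e"
    and z: "z \<in> complex_line a d"
  shows "complex_line a d \<subseteq> closure ((\<lambda>v. z + v) ` V)"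
proof
  fix x assume "x \<in> complex_line a d"
  obtain s t where s: "z = a + s *s d" and t: "x = a + t *s d"
    using z \<open>x \<in> complex_line a d\<close> by (auto simp: complex_line_def)
  show "x \<in> closure ((\<lambda>v. z + v) ` V)"
    unfolding closure_approachable
  proof (intro allI impI)
    fix e :: real assume "e > 0"
    have dpos: "norm d + 1 > 0" by (simp add: add_nonneg_pos)
    with \<open>e > 0\<close> have "e / (norm d + 1) > 0" by simp
    then obtain c where c: "c *s d \<in> V" "cmod ((t - s) - c) < e / (norm d + 1)"
      using approx by blast
    have "dist (z + c *s d) x = norm (- ((t - s) - c) *s d)"
      unfolding s t dist_norm by (simp add: vec_eq_iff algebra_simps)
    also have "\<dots> = cmod ((t - s) - c) * norm d" by (simp only: norm_vector_smult norm_minus_cancel)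
    also have "\<dots> \<le> cmod ((t - s) - c) * (norm d + 1)" by (simp add: mult_left_mono)
    also have "\<dots> < e" using c(2) by (simp add: pos_less_divide_eq[OF dpos])
    finally show "\<exists>y\<in>(\<lambda>v. z + v) ` V. dist y x < e" using c(1) by blast
  qed
qed

lemma contracting_choice:
  assumes "lam \<notin> \<real>" and "cmod lam \<noteq> 1"
  obtains rho where "rho \<in> {lam, inverse lam}" "Im rho \<noteq> 0" "cmod rho < 1"
proof (cases "cmod lam < 1")
  case True
  then show ?thesis using that[of lam] assms(1) by (simp add: complex_is_Real_iff)
next
  case False
  with assms(2) have "cmod (inverse lam) < 1" by (simp add: norm_inverse inverse_less_1_iff)
  moreover have "Im (inverse lam) \<noteq> 0" using assms(1) by (simp add: complex_is_Real_iff)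
  ultimately show ?thesis by (intro that[of "inverse lam"]) auto
qed

(* Core of the density argument: the commutator of the generators is a translation by
   kappa (b - a) with kappa = (mu - 1)(1 - lam) non-zero, and conjugating it by a contracting
   non-real homothety yields translations whose coefficients approximate every complex number. *)
lemma homothety_group_translations_dense:
  assumes "lam \<notin> \<real>" and "cmod lam \<noteq> 1" and "mu \<noteq> 0" and "mu \<noteq> 1" and e: "e > 0"
  shows "\<exists>c. c *s (b - a) \<in> translation_vectors (gen_group {homothety a lam, homothety b mu})
             \<and> cmod (w - c) < e"
proof -
  let ?S = "{homothety a lam, homothety b mu}"
  let ?V = "translation_vectors (gen_group ?S)"
  have lam0: "lam \<noteq> 0" using assms(1) by auto
  have bij: "\<And>s. s \<in> ?S \<Longrightarrow> bij s" using bij_homothety lam0 assms(3) by auto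
  have inverses: "homothety a (inverse lam) \<in> gen_group ?S" "homothety b (inverse mu) \<in> gen_group ?S"
    using gen_group_inv_gen[of "homothety a lam" ?S] gen_group_inv_gen[of "homothety b mu" ?S]
    by (simp_all add: inv_homothety lam0 assms(3))
  define kappa where "kappa = (mu - 1) * (1 - lam)"
  have kappa0: "kappa \<noteq> 0" using assms(1,4) by (auto simp: kappa_def)
  have "homothety a lam \<circ> homothety b mu \<circ> homothety a (inverse lam) \<circ> homothety b (inverse mu)
        \<in> gen_group ?S"
    using inverses gen_group_gen[of _ ?S] by (simp add: gen_group_comp)
  then have kappa_vector: "kappa *s (b - a) \<in> ?V"
    unfolding translation_vectors_def kappa_def homothety_commutator[OF lam0 assms(3)] by simp
  obtain rho where rho: "rho \<in> {lam, inverse lam}" "Im rho \<noteq> 0" "cmod rho < 1"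
    using contracting_choice[OF assms(1,2)] .
  then have rho_in_G: "homothety a rho \<in> gen_group ?S" and "rho \<noteq> 0"
    using inverses gen_group_gen[of _ ?S] by auto
  obtain m p q where "cmod (w - kappa * (rho ^ m * (of_int p + of_int q * rho))) < e"
    using scaled_lattice_dense[OF rho(2,3) kappa0 e] by blast
  moreover have "(kappa * (rho ^ m * (of_int p + of_int q * rho))) *s (b - a) \<in> ?V"
    using translation_vectors_scaled_lattice[OF bij rho_in_G \<open>rho \<noteq> 0\<close> kappa_vector,
        of m p q, unfolded vector_smult_assoc mult.commute[of _ kappa]] .
  ultimately show ?thesis by blast
qed

lemma homothety_group_preserves_line:
  assumes "lam \<noteq> 0" and "mu \<noteq> 0"
    and "h \<in> gen_group {homothety a lam, homothety b mu}" and "x \<in> complex_line a (b - a)"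
  shows "h x \<in> complex_line a (b - a)"
proof -
  have "a = a + 0 *s (b - a)" "b = a + 1 *s (b - a)" by simp_all
  then have centres: "a \<in> complex_line a (b - a)" "b \<in> complex_line a (b - a)"
    unfolding complex_line_def by blast+
  from assms(3,4) show ?thesis
    by (rule gen_group_preserves[rotated 2])
      (auto simp: inv_homothety assms(1,2) homothety_complex_line centres)
qed

theorem lemma3p1:
  fixes lam mu :: complex and a b :: "complex^'n"
  assumes "lam \<notin> \<real>" and "cmod lam \<noteq> 1"
    and "mu \<noteq> 0" and "mu \<noteq> 1"
    and "a \<noteq> b"
  defines "G \<equiv> gen_group {homothety a lam, homothety b mu}"
    and "L \<equiv> {a + t *s (b - a) | t. True}"
  shows "\<forall>z\<in>L. closure (orbit (translations_in G) z) = L \<and> closure (orbit G z) = L"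
proof
  fix z assume "z \<in> L"
  have L: "L = complex_line a (b - a)" unfolding L_def complex_line_def ..
  have lam0: "lam \<noteq> 0" using assms(1) by auto
  have "L \<subseteq> closure (orbit (translations_in G) z)"
    using complex_line_subset_closure_translates[OF homothety_group_translations_dense[OF assms(1-4)]]
      \<open>z \<in> L\<close>
    by (simp add: L G_def orbit_translations_in)
  moreover have "orbit (translations_in G) z \<subseteq> orbit G z"
    by (auto simp: orbit_def translations_in_def)
  moreover have "orbit G z \<subseteq> L"
    using homothety_group_preserves_line[OF lam0 assms(3)] \<open>z \<in> L\<close>
    by (auto simp: orbit_def G_def L)
  then have "closure (orbit G z) \<subseteq> L"
    using closed_complex_line closure_minimal by (metis L)
  ultimately show "closure (orbit (translations_in G) z) = L \<and> closure (orbit G z) = L"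
    using closure_mono by blast
qed

end
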